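(* Let $\mathbb{A}=(\mathbb{L},(\lozenge_i)_{i\in\mathsf{Ag}},(\Box_i)_{i\in\mathsf{Ag}})$ be an epistemic Heyting algebra and let $\mathbb{E}=(E,(\sim_i)_{i\in\mathsf{Ag}},(P_i)_{i\in\mathsf{Ag}},\Phi,\mathsf{pre})$ be a probabilistic event structure over $\mathbb{A}$. Then the intermediate algebra $\prod_{\mathbb{E}}\mathbb{A}$ is an epistemic Heyting algebra.
   Context: Fix a set $\mathsf{Ag}$ of agents. A monadic Heyting algebra is a Heyting algebra $\mathbb{L}$ with, for each $i\in\mathsf{Ag}$, monotone unary operations $\lozenge_i,\Box_i$ such that for all $a,b$: $a\leq\lozenge_i a$; $\Box_i a\leq a$; $\lozenge_i(a\vee b)\leq\lozenge_i a\vee\lozenge_i b$; $\Box_i(a\to b)\leq\Box_i a\to\Box_i b$; $\lozenge_i a\leq\Box_i\lozenge_i a$; $\lozenge_i\Box_i a\leq\Box_i a$; $\Box_i(a\to b)\leq\lozenge_i a\to\lozenge_i b$; $\lozenge_i\bot\leq\bot$; $\top\leq\Box_i\top$. An epistemic Heyting algebra is a finite monadic Heyting algebra with $\lozenge_i a\vee\neg\lozenge_i a=\top$ for all $i,a$. A pre-ordered multiset on a set $X$ is a multiset of elements of $X$ in which the $n$ copies $x_1,\dots,x_n$ of any element $x$ of multiplicity $n$ carry the linear order $x_1\prec\cdots\prec x_n$. A probabilistic event structure over $\mathbb{A}$ is a tuple $(E,(\sim_i),(P_i),\Phi,\mathsf{pre})$ where: $E$ is a non-empty finite set; each $\sim_i$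 is an equivalence relation on $E$; each $P_i:E\to\,]0,1]$ satisfies $\sum\{P_i(e')\mid e'\sim_i e\}=1$ for all $e$; $\Phi$ is a finite pre-ordered multiset on $\mathbb{A}$ such that any $a,b\in\Phi$ arising from distinct elements of $\mathbb{A}$ satisfy $a\wedge b=\bot$ or $a<b$ or $b<a$; $\mathsf{pre}$ assigns to each $a\in\Phi$ a probability distribution $\mathsf{pre}(\bullet\mid a)$ on $E$; and for all $a\in\Phi$, $e\in E$, if $\mathsf{pre}(e\mid a)=0$ then $\mathsf{pre}(e\mid b)=0$ for all $b\in\Phi$ with $a<b$ (if $a,b$ arise from distinct elements) or $a\prec b$ (if they are copies of the same element). The intermediate algebra $\prod_{\mathbb{E}}\mathbb{A}=(\prod_{|E|}\mathbb{L},(\lozenge'_i),(\Box'_i))$ has as carrier the set of all maps $f:E\to\mathbb{A}$ with the pointwise Heyting algebra operations, and $(\lozenge'_i f)(e)=\bigvee\{\lozenge_i f(e')\mid e'\sim_i e\}$, $(\Box'_i f)(e)=\bigwedge\{\Box_i f(e')\mid e'\sim_i e\}$. *)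

theory Defs
  imports Complex_Main "HOL-Library.Multiset" "HOL-Library.FuncSet"
begin

record ('i, 'a) mha =
  carr :: "'a set"
  mt   :: "'a \<Rightarrow> 'a \<Rightarrow> 'a"
  jn   :: "'a \<Rightarrow> 'a \<Rightarrow> 'a"
  im   :: "'a \<Rightarrow> 'a \<Rightarrow> 'a"
  bt   :: "'a"
  tp   :: "'a"
  dia  :: "'i \<Rightarrow> 'a \<Rightarrow> 'a"
  box  :: "'i \<Rightarrow> 'a \<Rightarrow> 'a"

definition hle :: "('i, 'a) mha \<Rightarrow> 'a \<Rightarrow> 'a \<Rightarrow> bool" where
  "hle A a b \<longleftrightarrow> mt A a b = a"

definition hlt :: "('i, 'a) mha \<Rightarrow> 'a \<Rightarrow> 'a \<Rightarrow> bool" where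
  "hlt A a b \<longleftrightarrow> hle A a b \<and> a \<noteq> b"

definition hneg :: "('i, 'a) mha \<Rightarrow> 'a \<Rightarrow> 'a" where
  "hneg A a = im A a (bt A)"

definition hlub :: "('i, 'a) mha \<Rightarrow> 'a set \<Rightarrow> 'a" where
  "hlub A S = (THE x. x \<in> carr A \<and> (\<forall>y\<in>S. hle A y x) \<and>
                 (\<forall>z\<in>carr A. (\<forall>y\<in>S. hle A y z) \<longrightarrow> hle A x z))"

definition hglb :: "('i, 'a) mha \<Rightarrow> 'a set \<Rightarrow> 'a" where
  "hglb A S = (THE x. x \<in> carr A \<and> (\<forall>y\<in>S. hle A x y) \<and>
                 (\<forall>z\<in>carr A. (\<forall>y\<in>S. hle A z y) \<longrightarrow> hle A z x))"

definition heyting_algebra :: "('i, 'a) mha \<Rightarrow> bool" where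
  "heyting_algebra A \<longleftrightarrow>
     bt A \<in> carr A \<and> tp A \<in> carr A \<and>
     (\<forall>a\<in>carr A. \<forall>b\<in>carr A.
        mt A a b \<in> carr A \<and> jn A a b \<in> carr A \<and> im A a b \<in> carr A) \<and>
     (\<forall>a\<in>carr A. \<forall>b\<in>carr A.
        mt A a b = mt A b a \<and> jn A a b = jn A b a \<and>
        mt A a (jn A a b) = a \<and> jn A a (mt A a b) = a) \<and>
     (\<forall>a\<in>carr A. \<forall>b\<in>carr A. \<forall>c\<in>carr A.
        mt A (mt A a b) c = mt A a (mt A b c) \<and>
        jn A (jn A a b) c = jn A a (jn A b c)) \<and>
     (\<forall>a\<in>carr A. hle A (bt A) a \<and> hle A a (tp A)) \<and>
     (\<forall>a\<in>carr A. \<forall>b\<in>carr A. \<forall>c\<in>carr A.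
        hle A (mt A a b) c \<longleftrightarrow> hle A a (im A b c))"

definition monadic_ha :: "'i set \<Rightarrow> ('i, 'a) mha \<Rightarrow> bool" where
  "monadic_ha Ag A \<longleftrightarrow> heyting_algebra A \<and>
     (\<forall>i\<in>Ag.
       (\<forall>a\<in>carr A. dia A i a \<in> carr A \<and> box A i a \<in> carr A) \<and>
       (\<forall>a\<in>carr A. \<forall>b\<in>carr A. hle A a b \<longrightarrow>
            hle A (dia A i a) (dia A i b) \<and> hle A (box A i a) (box A i b)) \<and>
       (\<forall>a\<in>carr A. \<forall>b\<in>carr A.
          hle A a (dia A i a) \<and>
          hle A (box A i a) a \<and>
          hle A (dia A i (jn A a b)) (jn A (dia A i a) (dia A i b)) \<and>
          hle A (box A i (im A a b)) (im A (box A i a) (box A i b)) \<and>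
          hle A (dia A i a) (box A i (dia A i a)) \<and>
          hle A (dia A i (box A i a)) (box A i a) \<and>
          hle A (box A i (im A a b)) (im A (dia A i a) (dia A i b))) \<and>
       hle A (dia A i (bt A)) (bt A) \<and>
       hle A (tp A) (box A i (tp A)))"

definition epistemic_ha :: "'i set \<Rightarrow> ('i, 'a) mha \<Rightarrow> bool" where
  "epistemic_ha Ag A \<longleftrightarrow> monadic_ha Ag A \<and> finite (carr A) \<and>
     (\<forall>i\<in>Ag. \<forall>a\<in>carr A. jn A (dia A i a) (hneg A (dia A i a)) = tp A)"

text \<open>A pre-ordered multiset: the copies of an element a of
  multiplicity n are "(a,0) \<prec> \<dots> \<prec> (a,n-1)".\<close>
definition copies :: "'a multiset \<Rightarrow> ('a \<times> nat) set" where
  "copies Phi = {(a, k). k < count Phi a}"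

definition prob_event_structure ::
  "'i set \<Rightarrow> ('i, 'a) mha \<Rightarrow> 'e set \<Rightarrow> ('i \<Rightarrow> 'e \<Rightarrow> 'e \<Rightarrow> bool) \<Rightarrow>
   ('i \<Rightarrow> 'e \<Rightarrow> real) \<Rightarrow> 'a multiset \<Rightarrow> ('a \<times> nat \<Rightarrow> 'e \<Rightarrow> real) \<Rightarrow> bool" where
  "prob_event_structure Ag A E sim P Phi pre \<longleftrightarrow>
     E \<noteq> {} \<and> finite E \<and>
     (\<forall>i\<in>Ag. equiv E {(x, y). x \<in> E \<and> y \<in> E \<and> sim i x y}) \<and>
     (\<forall>i\<in>Ag. \<forall>e\<in>E. 0 < P i e \<and> P i e \<le> 1) \<and>
     (\<forall>i\<in>Ag. \<forall>e\<in>E. (\<Sum>e'\<in>{e'\<in>E. sim i e' e}. P i e') = 1) \<and>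
     set_mset Phi \<subseteq> carr A \<and>
     (\<forall>a\<in>set_mset Phi. \<forall>b\<in>set_mset Phi. a \<noteq> b \<longrightarrow>
         mt A a b = bt A \<or> hlt A a b \<or> hlt A b a) \<and>
     (\<forall>c\<in>copies Phi. (\<forall>e\<in>E. 0 \<le> pre c e) \<and> (\<Sum>e\<in>E. pre c e) = 1) \<and>
     (\<forall>(a, k)\<in>copies Phi. \<forall>(b, l)\<in>copies Phi. \<forall>e\<in>E.
         pre (a, k) e = 0 \<longrightarrow>
         ((a \<noteq> b \<and> hlt A a b) \<or> (a = b \<and> k < l)) \<longrightarrow> pre (b, l) e = 0)"

definition intermediate ::
  "('i, 'a) mha \<Rightarrow> 'e set \<Rightarrow> ('i \<Rightarrow> 'e \<Rightarrow> 'e \<Rightarrow> bool) \<Rightarrow> ('i, 'e \<Rightarrow> 'a) mha" where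
  "intermediate A E sim =
     \<lparr> carr = E \<rightarrow>\<^sub>E carr A,
       mt = (\<lambda>f g. restrict (\<lambda>e. mt A (f e) (g e)) E),
       jn = (\<lambda>f g. restrict (\<lambda>e. jn A (f e) (g e)) E),
       im = (\<lambda>f g. restrict (\<lambda>e. im A (f e) (g e)) E),
       bt = restrict (\<lambda>e. bt A) E,
       tp = restrict (\<lambda>e. tp A) E,
       dia = (\<lambda>i f. restrict (\<lambda>e. hlub A {dia A i (f e') |e'. e' \<in> E \<and> sim i e' e}) E),
       box = (\<lambda>i f. restrict (\<lambda>e. hglb A {box A i (f e') |e'. e' \<in> E \<and> sim i e' e}) E) \<rparr>"

end

theory Submission
  imports Defs
begin

text \<open>
  The lattice and Heyting operations of the intermediate algebra are pointwise, so it is a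
  power of the base algebra. Its modalities at e are the join of the \<open>\<lozenge>\<^sub>i f e'\<close> and the meet
  of the \<open>\<box>\<^sub>i f e'\<close> over the \<open>\<sim>\<^sub>i\<close>-class of e; they are constant on classes, and each monadic
  axiom reduces, through the universal property of finite joins and meets, to the same axiom
  in the base algebra. As \<open>\<lozenge>\<^sub>i\<close> preserves finite nonempty joins, the value at e of \<open>\<lozenge>'\<^sub>i f\<close>
  is \<open>\<lozenge>\<^sub>i\<close> of the join of f over the class, so the epistemic law of the base algebra
  applies pointwise.
\<close>

lemma intermediate_simps [simp]:
  "carr (intermediate A E sim) = E \<rightarrow>\<^sub>E carr A"
  "e \<in> E \<Longrightarrow> mt (intermediate A E sim) f g e = mt A (f e) (g e)"
  "e \<in> E \<Longrightarrow> jn (intermediate A E sim) f g e = jn A (f e) (g e)"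
  "e \<in> E \<Longrightarrow> im (intermediate A E sim) f g e = im A (f e) (g e)"
  "e \<in> E \<Longrightarrow> bt (intermediate A E sim) e = bt A"
  "e \<in> E \<Longrightarrow> tp (intermediate A E sim) e = tp A"
  by (simp_all add: intermediate_def)

lemma restrict_eq_PiE:
  assumes "f \<in> E \<rightarrow>\<^sub>E B" and "\<And>x. x \<in> E \<Longrightarrow> h x = f x"
  shows "restrict h E = f"
  using restrict_ext[of E h f] assms by simp

lemma hle_intermediate_iff:
  assumes "f \<in> E \<rightarrow>\<^sub>E carr A"
  shows "hle (intermediate A E sim) f g \<longleftrightarrow> (\<forall>e\<in>E. hle A (f e) (g e))"
proof
  assume "hle (intermediate A E sim) f g"
  then show "\<forall>e\<in>E. hle A (f e) (g e)"
    unfolding hle_def by (metis intermediate_simps(2))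
next
  assume "\<forall>e\<in>E. hle A (f e) (g e)"
  then show "hle (intermediate A E sim) f g"
    unfolding hle_def using restrict_eq_PiE[OF assms] by (simp add: intermediate_def)
qed

locale heyting =
  fixes A :: "('i, 'a) mha"
  assumes ha: "heyting_algebra A"
begin

abbreviation hle_A (infix "\<sqsubseteq>" 50) where "a \<sqsubseteq> b \<equiv> hle A a b"

lemma bt_closed [simp]: "bt A \<in> carr A"
  and tp_closed [simp]: "tp A \<in> carr A"
  and mt_closed [simp]: "a \<in> carr A \<Longrightarrow> b \<in> carr A \<Longrightarrow> mt A a b \<in> carr A"
  and jn_closed [simp]: "a \<in> carr A \<Longrightarrow> b \<in> carr A \<Longrightarrow> jn A a b \<in> carr A"
  and im_closed [simp]: "a \<in> carr A \<Longrightarrow> b \<in> carr A \<Longrightarrow> im A a b \<in> carr A"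
  using ha unfolding heyting_algebra_def by auto

lemma mt_commute: "a \<in> carr A \<Longrightarrow> b \<in> carr A \<Longrightarrow> mt A a b = mt A b a"
  and jn_commute: "a \<in> carr A \<Longrightarrow> b \<in> carr A \<Longrightarrow> jn A a b = jn A b a"
  and mt_jn_absorb: "a \<in> carr A \<Longrightarrow> b \<in> carr A \<Longrightarrow> mt A a (jn A a b) = a"
  and jn_mt_absorb: "a \<in> carr A \<Longrightarrow> b \<in> carr A \<Longrightarrow> jn A a (mt A a b) = a"
  and mt_assoc: "a \<in> carr A \<Longrightarrow> b \<in> carr A \<Longrightarrow> c \<in> carr A \<Longrightarrow>
                 mt A (mt A a b) c = mt A a (mt A b c)"
  and jn_assoc: "a \<in> carr A \<Longrightarrow> b \<in> carr A \<Longrightarrow> c \<in> carr A \<Longrightarrow>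
                 jn A (jn A a b) c = jn A a (jn A b c)"
  and bt_hle: "a \<in> carr A \<Longrightarrow> bt A \<sqsubseteq> a"
  and hle_tp: "a \<in> carr A \<Longrightarrow> a \<sqsubseteq> tp A"
  and residuation: "a \<in> carr A \<Longrightarrow> b \<in> carr A \<Longrightarrow> c \<in> carr A \<Longrightarrow>
                    mt A a b \<sqsubseteq> c \<longleftrightarrow> a \<sqsubseteq> im A b c"
  using ha unfolding heyting_algebra_def by auto

lemma mt_idem: "a \<in> carr A \<Longrightarrow> mt A a a = a"
  by (metis mt_jn_absorb jn_mt_absorb mt_closed)

lemma hle_refl: "a \<in> carr A \<Longrightarrow> a \<sqsubseteq> a"
  by (simp add: hle_def mt_idem)

lemma hle_antisym: "a \<in> carr A \<Longrightarrow> b \<in> carr A \<Longrightarrow> a \<sqsubseteq> b \<Longrightarrow> b \<sqsubseteq> a \<Longrightarrow> a = b"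
  by (metis hle_def mt_commute)

lemma hle_trans:
  "a \<in> carr A \<Longrightarrow> b \<in> carr A \<Longrightarrow> c \<in> carr A \<Longrightarrow> a \<sqsubseteq> b \<Longrightarrow> b \<sqsubseteq> c \<Longrightarrow> a \<sqsubseteq> c"
  by (metis hle_def mt_assoc)

lemma mt_lower1: "a \<in> carr A \<Longrightarrow> b \<in> carr A \<Longrightarrow> mt A a b \<sqsubseteq> a"
  unfolding hle_def by (metis mt_assoc mt_commute mt_idem)

lemma mt_lower2: "a \<in> carr A \<Longrightarrow> b \<in> carr A \<Longrightarrow> mt A a b \<sqsubseteq> b"
  by (metis mt_commute mt_lower1)

lemma mt_greatest:
  "a \<in> carr A \<Longrightarrow> b \<in> carr A \<Longrightarrow> c \<in> carr A \<Longrightarrow> c \<sqsubseteq> a \<Longrightarrow> c \<sqsubseteq> b \<Longrightarrow> c \<sqsubseteq> mt A a b"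
  unfolding hle_def by (metis mt_assoc)

lemma jn_upper1: "a \<in> carr A \<Longrightarrow> b \<in> carr A \<Longrightarrow> a \<sqsubseteq> jn A a b"
  unfolding hle_def by (simp add: mt_jn_absorb)

lemma jn_upper2: "a \<in> carr A \<Longrightarrow> b \<in> carr A \<Longrightarrow> b \<sqsubseteq> jn A a b"
  by (metis jn_commute jn_upper1)

lemma jn_least:
  assumes "a \<in> carr A" "b \<in> carr A" "c \<in> carr A" "a \<sqsubseteq> c" "b \<sqsubseteq> c"
  shows "jn A a b \<sqsubseteq> c"
proof -
  have jn_absorb: "x \<in> carr A \<Longrightarrow> y \<in> carr A \<Longrightarrow> x \<sqsubseteq> y \<Longrightarrow> jn A x y = y" for x y
    unfolding hle_def by (metis jn_mt_absorb jn_commute mt_commute)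
  have "jn A (jn A a b) c = c"
    using assms by (simp add: jn_assoc jn_absorb)
  then show ?thesis
    using assms unfolding hle_def by (metis mt_jn_absorb jn_closed)
qed

lemma mt_mono:
  "a \<in> carr A \<Longrightarrow> b \<in> carr A \<Longrightarrow> a' \<in> carr A \<Longrightarrow> b' \<in> carr A \<Longrightarrow>
   a \<sqsubseteq> a' \<Longrightarrow> b \<sqsubseteq> b' \<Longrightarrow> mt A a b \<sqsubseteq> mt A a' b'"
  by (meson hle_trans mt_closed mt_greatest mt_lower1 mt_lower2)

lemma jn_mono:
  "a \<in> carr A \<Longrightarrow> b \<in> carr A \<Longrightarrow> a' \<in> carr A \<Longrightarrow> b' \<in> carr A \<Longrightarrow>
   a \<sqsubseteq> a' \<Longrightarrow> b \<sqsubseteq> b' \<Longrightarrow> jn A a b \<sqsubseteq> jn A a' b'"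
  by (meson hle_trans jn_closed jn_least jn_upper1 jn_upper2)

lemma PiE_carr_apply [simp]: "f \<in> E \<rightarrow>\<^sub>E carr A \<Longrightarrow> e \<in> E \<Longrightarrow> f e \<in> carr A"
  by (rule PiE_mem)

lemma intermediate_closed [simp]:
  "f \<in> E \<rightarrow>\<^sub>E carr A \<Longrightarrow> g \<in> E \<rightarrow>\<^sub>E carr A \<Longrightarrow> mt (intermediate A E sim) f g \<in> E \<rightarrow>\<^sub>E carr A"
  "f \<in> E \<rightarrow>\<^sub>E carr A \<Longrightarrow> g \<in> E \<rightarrow>\<^sub>E carr A \<Longrightarrow> jn (intermediate A E sim) f g \<in> E \<rightarrow>\<^sub>E carr A"
  "f \<in> E \<rightarrow>\<^sub>E carr A \<Longrightarrow> g \<in> E \<rightarrow>\<^sub>E carr A \<Longrightarrow> im (intermediate A E sim) f g \<in> E \<rightarrow>\<^sub>E carr A"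
  "bt (intermediate A E sim) \<in> E \<rightarrow>\<^sub>E carr A"
  "tp (intermediate A E sim) \<in> E \<rightarrow>\<^sub>E carr A"
  by (auto simp: intermediate_def)

lemma heyting_algebra_intermediate: "heyting_algebra (intermediate A E sim)"
  unfolding heyting_algebra_def intermediate_simps(1)
proof (intro conjI ballI)
  let ?I = "intermediate A E sim"
  fix f g h assume f: "f \<in> E \<rightarrow>\<^sub>E carr A" and g: "g \<in> E \<rightarrow>\<^sub>E carr A" and h: "h \<in> E \<rightarrow>\<^sub>E carr A"
  show "mt ?I (mt ?I f g) h = mt ?I f (mt ?I g h)" "jn ?I (jn ?I f g) h = jn ?I f (jn ?I g h)"
    using f g h by (auto simp: intermediate_def mt_assoc jn_assoc intro!: restrict_ext)
next
  let ?I = "intermediate A E sim"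
  fix f g h assume f: "f \<in> E \<rightarrow>\<^sub>E carr A" and g: "g \<in> E \<rightarrow>\<^sub>E carr A" and h: "h \<in> E \<rightarrow>\<^sub>E carr A"
  show "hle ?I (mt ?I f g) h \<longleftrightarrow> hle ?I f (im ?I g h)"
    using f g h by (simp add: hle_intermediate_iff residuation)
next
  let ?I = "intermediate A E sim"
  fix f g assume f: "f \<in> E \<rightarrow>\<^sub>E carr A" and g: "g \<in> E \<rightarrow>\<^sub>E carr A"
  show "mt ?I f g = mt ?I g f" "jn ?I f g = jn ?I g f"
    using f g by (auto simp: intermediate_def mt_commute jn_commute intro!: restrict_ext)
  show "mt ?I f (jn ?I f g) = f" "jn ?I f (mt ?I f g) = f"
    using f g by (auto simp: intermediate_def mt_jn_absorb jn_mt_absorb intro!: restrict_eq_PiE)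
next
  let ?I = "intermediate A E sim"
  fix f assume f: "f \<in> E \<rightarrow>\<^sub>E carr A"
  show "hle ?I (bt ?I) f" "hle ?I f (tp ?I)"
    using f by (simp_all add: hle_intermediate_iff bt_hle hle_tp)
qed simp_all

definition is_lub :: "'a set \<Rightarrow> 'a \<Rightarrow> bool" where
  "is_lub S x \<longleftrightarrow> x \<in> carr A \<and> (\<forall>y\<in>S. y \<sqsubseteq> x) \<and> (\<forall>z\<in>carr A. (\<forall>y\<in>S. y \<sqsubseteq> z) \<longrightarrow> x \<sqsubseteq> z)"

definition is_glb :: "'a set \<Rightarrow> 'a \<Rightarrow> bool" where
  "is_glb S x \<longleftrightarrow> x \<in> carr A \<and> (\<forall>y\<in>S. x \<sqsubseteq> y) \<and> (\<forall>z\<in>carr A. (\<forall>y\<in>S. z \<sqsubseteq> y) \<longrightarrow> z \<sqsubseteq> x)"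

lemma hlub_eq: "is_lub S x \<Longrightarrow> hlub A S = x"
  unfolding hlub_def is_lub_def[symmetric]
  by (rule the_equality) (auto simp: is_lub_def intro: hle_antisym)

lemma hglb_eq: "is_glb S x \<Longrightarrow> hglb A S = x"
  unfolding hglb_def is_glb_def[symmetric]
  by (rule the_equality) (auto simp: is_glb_def intro: hle_antisym)

lemma hlub_singleton [simp]: "x \<in> carr A \<Longrightarrow> hlub A {x} = x"
  by (rule hlub_eq) (auto simp: is_lub_def hle_refl)

lemma hglb_singleton [simp]: "x \<in> carr A \<Longrightarrow> hglb A {x} = x"
  by (rule hglb_eq) (auto simp: is_glb_def hle_refl)

lemma is_lub_insert:
  "is_lub S s \<Longrightarrow> S \<subseteq> carr A \<Longrightarrow> x \<in> carr A \<Longrightarrow> is_lub (insert x S) (jn A x s)"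
  unfolding is_lub_def
  by (auto intro: jn_upper1 jn_least) (meson subsetD jn_closed jn_upper2 hle_trans)

lemma is_glb_insert:
  "is_glb S s \<Longrightarrow> S \<subseteq> carr A \<Longrightarrow> x \<in> carr A \<Longrightarrow> is_glb (insert x S) (mt A x s)"
  unfolding is_glb_def
  by (auto intro: mt_lower1 mt_greatest) (meson subsetD mt_closed mt_lower2 hle_trans)

lemma is_lub_hlub: "finite S \<Longrightarrow> S \<noteq> {} \<Longrightarrow> S \<subseteq> carr A \<Longrightarrow> is_lub S (hlub A S)"
proof (induction S rule: finite_ne_induct)
  case (singleton x)
  then show ?case by (simp add: is_lub_def hle_refl)
next
  case (insert x F)
  then have "is_lub (insert x F) (jn A x (hlub A F))"
    by (simp add: is_lub_insert)
  then show ?case by (simp add: hlub_eq)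
qed

lemma is_glb_hglb: "finite S \<Longrightarrow> S \<noteq> {} \<Longrightarrow> S \<subseteq> carr A \<Longrightarrow> is_glb S (hglb A S)"
proof (induction S rule: finite_ne_induct)
  case (singleton x)
  then show ?case by (simp add: is_glb_def hle_refl)
next
  case (insert x F)
  then have "is_glb (insert x F) (mt A x (hglb A F))"
    by (simp add: is_glb_insert)
  then show ?case by (simp add: hglb_eq)
qed

lemma hlub_image_hom:
  assumes d_closed: "\<And>a. a \<in> carr A \<Longrightarrow> d a \<in> carr A"
    and d_jn: "\<And>a b. a \<in> carr A \<Longrightarrow> b \<in> carr A \<Longrightarrow> d (jn A a b) = jn A (d a) (d b)"
  shows "finite S \<Longrightarrow> S \<noteq> {} \<Longrightarrow> S \<subseteq> carr A \<Longrightarrow> hlub A (d ` S) = d (hlub A S)"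
proof (induction S rule: finite_ne_induct)
  case (singleton x)
  then show ?case by (simp add: d_closed)
next
  case (insert x F)
  have F_lub: "is_lub F (hlub A F)"
    using insert by (simp add: is_lub_hlub)
  have dF_lub: "is_lub (d ` F) (hlub A (d ` F))"
    by (rule is_lub_hlub) (use insert d_closed in auto)
  have "hlub A (d ` insert x F) = jn A (d x) (hlub A (d ` F))"
    using is_lub_insert[OF dF_lub] insert d_closed by (auto intro!: hlub_eq)
  also have "\<dots> = d (jn A x (hlub A F))"
    using insert F_lub by (simp add: d_jn is_lub_def)
  also have "\<dots> = d (hlub A (insert x F))"
    using is_lub_insert[OF F_lub] insert by (metis hlub_eq insert_subset)
  finally show ?case .
qed

context
  fixes S :: "'b set"
  assumes finite_S: "finite S" and S_nonempty: "S \<noteq> {}"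
begin

lemma hlub_image_closed: "f ` S \<subseteq> carr A \<Longrightarrow> hlub A (f ` S) \<in> carr A"
  and hlub_image_upper: "f ` S \<subseteq> carr A \<Longrightarrow> x \<in> S \<Longrightarrow> f x \<sqsubseteq> hlub A (f ` S)"
  and hlub_image_least: "f ` S \<subseteq> carr A \<Longrightarrow> z \<in> carr A \<Longrightarrow> (\<And>x. x \<in> S \<Longrightarrow> f x \<sqsubseteq> z) \<Longrightarrow>
                         hlub A (f ` S) \<sqsubseteq> z"
  using is_lub_hlub[of "f ` S"] finite_S S_nonempty unfolding is_lub_def by auto

lemma hglb_image_closed: "f ` S \<subseteq> carr A \<Longrightarrow> hglb A (f ` S) \<in> carr A"
  and hglb_image_lower: "f ` S \<subseteq> carr A \<Longrightarrow> x \<in> S \<Longrightarrow> hglb A (f ` S) \<sqsubseteq> f x"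
  and hglb_image_greatest: "f ` S \<subseteq> carr A \<Longrightarrow> z \<in> carr A \<Longrightarrow> (\<And>x. x \<in> S \<Longrightarrow> z \<sqsubseteq> f x) \<Longrightarrow>
                            z \<sqsubseteq> hglb A (f ` S)"
  using is_glb_hglb[of "f ` S"] finite_S S_nonempty unfolding is_glb_def by auto

end

end

locale monadic = heyting A for A :: "('i, 'a) mha" +
  fixes Ag :: "'i set"
  assumes monadic: "monadic_ha Ag A"
begin

context
  fixes i assumes i: "i \<in> Ag"
begin

lemma dia_closed [simp]: "a \<in> carr A \<Longrightarrow> dia A i a \<in> carr A"
  and box_closed [simp]: "a \<in> carr A \<Longrightarrow> box A i a \<in> carr A"
  and dia_mono: "a \<in> carr A \<Longrightarrow> b \<in> carr A \<Longrightarrow> a \<sqsubseteq> b \<Longrightarrow> dia A i a \<sqsubseteq> dia A i b"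
  and box_mono: "a \<in> carr A \<Longrightarrow> b \<in> carr A \<Longrightarrow> a \<sqsubseteq> b \<Longrightarrow> box A i a \<sqsubseteq> box A i b"
  and hle_dia: "a \<in> carr A \<Longrightarrow> a \<sqsubseteq> dia A i a"
  and box_hle: "a \<in> carr A \<Longrightarrow> box A i a \<sqsubseteq> a"
  and dia_jn_hle: "a \<in> carr A \<Longrightarrow> b \<in> carr A \<Longrightarrow> dia A i (jn A a b) \<sqsubseteq> jn A (dia A i a) (dia A i b)"
  and box_im_hle: "a \<in> carr A \<Longrightarrow> b \<in> carr A \<Longrightarrow> box A i (im A a b) \<sqsubseteq> im A (box A i a) (box A i b)"
  and dia_hle_box_dia: "a \<in> carr A \<Longrightarrow> dia A i a \<sqsubseteq> box A i (dia A i a)"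
  and dia_box_hle: "a \<in> carr A \<Longrightarrow> dia A i (box A i a) \<sqsubseteq> box A i a"
  and box_im_hle_im_dia: "a \<in> carr A \<Longrightarrow> b \<in> carr A \<Longrightarrow> box A i (im A a b) \<sqsubseteq> im A (dia A i a) (dia A i b)"
  and dia_bt_hle: "dia A i (bt A) \<sqsubseteq> bt A"
  and tp_hle_box: "tp A \<sqsubseteq> box A i (tp A)"
  using monadic i unfolding monadic_ha_def by auto

lemma dia_jn: "a \<in> carr A \<Longrightarrow> b \<in> carr A \<Longrightarrow> dia A i (jn A a b) = jn A (dia A i a) (dia A i b)"
  by (intro hle_antisym dia_jn_hle jn_least dia_mono jn_upper1 jn_upper2) simp_all

end

end

locale monadic_frame = monadic A Ag for A :: "('i, 'a) mha" and Ag +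
  fixes E :: "'e set" and sim :: "'i \<Rightarrow> 'e \<Rightarrow> 'e \<Rightarrow> bool"
  assumes finite_E: "finite E"
    and equiv_sim: "i \<in> Ag \<Longrightarrow> equiv E {(x, y). x \<in> E \<and> y \<in> E \<and> sim i x y}"
begin

abbreviation IA where "IA \<equiv> intermediate A E sim"

definition sim_class :: "'i \<Rightarrow> 'e \<Rightarrow> 'e set" where
  "sim_class i e = {e' \<in> E. sim i e' e}"

lemma finite_sim_class [simp]: "finite (sim_class i e)"
  using finite_E by (simp add: sim_class_def)

lemma sim_class_subset: "e' \<in> sim_class i e \<Longrightarrow> e' \<in> E"
  by (simp add: sim_class_def)

lemma dia_intermediate:
  assumes "e \<in> E"
  shows "dia IA i f e = hlub A ((\<lambda>e'. dia A i (f e')) ` sim_class i e)"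
proof -
  have "{dia A i (f e') |e'. e' \<in> E \<and> sim i e' e} = (\<lambda>e'. dia A i (f e')) ` sim_class i e"
    unfolding sim_class_def by blast
  then show ?thesis
    using assms by (simp add: intermediate_def)
qed

lemma box_intermediate:
  assumes "e \<in> E"
  shows "box IA i f e = hglb A ((\<lambda>e'. box A i (f e')) ` sim_class i e)"
proof -
  have "{box A i (f e') |e'. e' \<in> E \<and> sim i e' e} = (\<lambda>e'. box A i (f e')) ` sim_class i e"
    unfolding sim_class_def by blast
  then show ?thesis
    using assms by (simp add: intermediate_def)
qed

context
  fixes i assumes i: "i \<in> Ag"
begin

lemma self_in_sim_class: "e \<in> E \<Longrightarrow> e \<in> sim_class i e"
  using equiv_sim[OF i] unfolding sim_class_def equiv_def refl_on_def by blast

lemma sim_class_nonempty [simp]: "e \<in> E \<Longrightarrow> sim_class i e \<noteq> {}"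
  using self_in_sim_class by blast

lemma sim_class_eq: "e \<in> E \<Longrightarrow> e' \<in> sim_class i e \<Longrightarrow> sim_class i e' = sim_class i e"
  using equiv_sim[OF i] unfolding sim_class_def equiv_def sym_def trans_def by blast

lemma dia_intermediate_closed [simp]: "f \<in> E \<rightarrow>\<^sub>E carr A \<Longrightarrow> dia IA i f \<in> E \<rightarrow>\<^sub>E carr A"
  by (auto simp: PiE_iff dia_intermediate i intro!: hlub_image_closed dest: sim_class_subset)
     (simp add: intermediate_def)

lemma box_intermediate_closed [simp]: "f \<in> E \<rightarrow>\<^sub>E carr A \<Longrightarrow> box IA i f \<in> E \<rightarrow>\<^sub>E carr A"
  by (auto simp: PiE_iff box_intermediate i intro!: hglb_image_closed dest: sim_class_subset)
     (simp add: intermediate_def)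

lemma dia_intermediate_apply_closed [simp]: "f \<in> E \<rightarrow>\<^sub>E carr A \<Longrightarrow> e \<in> E \<Longrightarrow> dia IA i f e \<in> carr A"
  and box_intermediate_apply_closed [simp]: "f \<in> E \<rightarrow>\<^sub>E carr A \<Longrightarrow> e \<in> E \<Longrightarrow> box IA i f e \<in> carr A"
  by (simp_all add: PiE_mem[OF dia_intermediate_closed] PiE_mem[OF box_intermediate_closed])

lemma dia_intermediate_upper:
  assumes "f \<in> E \<rightarrow>\<^sub>E carr A" "e \<in> E" "e' \<in> sim_class i e"
  shows "dia A i (f e') \<sqsubseteq> dia IA i f e"
  unfolding dia_intermediate[OF assms(2)]
  by (rule hlub_image_upper[OF finite_sim_class sim_class_nonempty[OF assms(2)] _ assms(3)])
     (use assms i in \<open>auto dest: sim_class_subset\<close>)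

lemma dia_intermediate_least:
  assumes "f \<in> E \<rightarrow>\<^sub>E carr A" "e \<in> E" "z \<in> carr A"
    and "\<And>e'. e' \<in> sim_class i e \<Longrightarrow> dia A i (f e') \<sqsubseteq> z"
  shows "dia IA i f e \<sqsubseteq> z"
  unfolding dia_intermediate[OF assms(2)]
  by (rule hlub_image_least[OF finite_sim_class sim_class_nonempty[OF assms(2)] _ assms(3,4)])
     (use assms i in \<open>auto dest: sim_class_subset\<close>)

lemma box_intermediate_lower:
  assumes "f \<in> E \<rightarrow>\<^sub>E carr A" "e \<in> E" "e' \<in> sim_class i e"
  shows "box IA i f e \<sqsubseteq> box A i (f e')"
  unfolding box_intermediate[OF assms(2)]
  by (rule hglb_image_lower[OF finite_sim_class sim_class_nonempty[OF assms(2)] _ assms(3)])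
     (use assms i in \<open>auto dest: sim_class_subset\<close>)

lemma box_intermediate_greatest:
  assumes "f \<in> E \<rightarrow>\<^sub>E carr A" "e \<in> E" "z \<in> carr A"
    and "\<And>e'. e' \<in> sim_class i e \<Longrightarrow> z \<sqsubseteq> box A i (f e')"
  shows "z \<sqsubseteq> box IA i f e"
  unfolding box_intermediate[OF assms(2)]
  by (rule hglb_image_greatest[OF finite_sim_class sim_class_nonempty[OF assms(2)] _ assms(3,4)])
     (use assms i in \<open>auto dest: sim_class_subset\<close>)

lemma hlub_sim_class_closed [simp]:
  "f \<in> E \<rightarrow>\<^sub>E carr A \<Longrightarrow> e \<in> E \<Longrightarrow> hlub A (f ` sim_class i e) \<in> carr A"
  by (rule hlub_image_closed) (auto simp: sim_class_nonempty dest: sim_class_subset)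

lemma dia_intermediate_eq_dia_hlub:
  assumes f: "f \<in> E \<rightarrow>\<^sub>E carr A" and e: "e \<in> E"
  shows "dia IA i f e = dia A i (hlub A (f ` sim_class i e))"
  using hlub_image_hom[OF dia_closed[OF i] dia_jn[OF i], of "f ` sim_class i e"] f e i
  by (auto simp: dia_intermediate image_image dest: sim_class_subset)

lemma dia_intermediate_class_const:
  "e \<in> E \<Longrightarrow> e' \<in> sim_class i e \<Longrightarrow> dia IA i f e' = dia IA i f e"
  by (simp add: dia_intermediate sim_class_eq sim_class_subset)

lemma box_intermediate_class_const:
  "e \<in> E \<Longrightarrow> e' \<in> sim_class i e \<Longrightarrow> box IA i f e' = box IA i f e"
  by (simp add: box_intermediate sim_class_eq sim_class_subset)

lemma intermediate_hle_dia:
  assumes f: "f \<in> E \<rightarrow>\<^sub>E carr A"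
  shows "hle IA f (dia IA i f)"
  unfolding hle_intermediate_iff[OF f]
proof
  fix e assume e: "e \<in> E"
  show "f e \<sqsubseteq> dia IA i f e"
    using hle_trans[OF _ _ _ hle_dia[OF i] dia_intermediate_upper[OF f e self_in_sim_class[OF e]]] f e i
    by simp
qed

lemma intermediate_box_hle:
  assumes f: "f \<in> E \<rightarrow>\<^sub>E carr A"
  shows "hle IA (box IA i f) f"
  unfolding hle_intermediate_iff[OF box_intermediate_closed[OF f]]
proof
  fix e assume e: "e \<in> E"
  show "box IA i f e \<sqsubseteq> f e"
    using hle_trans[OF _ _ _ box_intermediate_lower[OF f e self_in_sim_class[OF e]] box_hle[OF i]] f e i
    by simp
qed

lemma intermediate_dia_mono:
  assumes f: "f \<in> E \<rightarrow>\<^sub>E carr A" and g: "g \<in> E \<rightarrow>\<^sub>E carr A" and fg: "hle IA f g"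
  shows "hle IA (dia IA i f) (dia IA i g)"
  unfolding hle_intermediate_iff[OF dia_intermediate_closed[OF f]]
proof (intro ballI dia_intermediate_least[OF f])
  fix e e' assume e: "e \<in> E" and e': "e' \<in> sim_class i e"
  have "dia A i (f e') \<sqsubseteq> dia A i (g e')"
    using fg f g e' i by (auto simp: hle_intermediate_iff dest: sim_class_subset intro!: dia_mono)
  then show "dia A i (f e') \<sqsubseteq> dia IA i g e"
    using hle_trans[OF _ _ _ _ dia_intermediate_upper[OF g e e']] f g e e' i
    by (simp add: sim_class_subset)
qed (use g in auto)

lemma intermediate_box_mono:
  assumes f: "f \<in> E \<rightarrow>\<^sub>E carr A" and g: "g \<in> E \<rightarrow>\<^sub>E carr A" and fg: "hle IA f g"
  shows "hle IA (box IA i f) (box IA i g)"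
  unfolding hle_intermediate_iff[OF box_intermediate_closed[OF f]]
proof (intro ballI box_intermediate_greatest[OF g])
  fix e e' assume e: "e \<in> E" and e': "e' \<in> sim_class i e"
  have "box A i (f e') \<sqsubseteq> box A i (g e')"
    using fg f g e' i by (auto simp: hle_intermediate_iff dest: sim_class_subset intro!: box_mono)
  then show "box IA i f e \<sqsubseteq> box A i (g e')"
    using hle_trans[OF _ _ _ box_intermediate_lower[OF f e e']] f g e e' i
    by (simp add: sim_class_subset)
qed (use f in auto)

lemma intermediate_dia_jn_hle:
  assumes f: "f \<in> E \<rightarrow>\<^sub>E carr A" and g: "g \<in> E \<rightarrow>\<^sub>E carr A"
  shows "hle IA (dia IA i (jn IA f g)) (jn IA (dia IA i f) (dia IA i g))"
  unfolding hle_intermediate_iff[OF dia_intermediate_closed[OF intermediate_closed(2)[OF f g]]]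
proof
  fix e assume e: "e \<in> E"
  have "dia IA i (jn IA f g) e \<sqsubseteq> jn A (dia IA i f e) (dia IA i g e)"
  proof (rule dia_intermediate_least[OF intermediate_closed(2)[OF f g] e])
    fix e' assume e': "e' \<in> sim_class i e"
    then have e'_E: "e' \<in> E" by (rule sim_class_subset)
    have additive: "dia A i (jn A (f e') (g e')) \<sqsubseteq> jn A (dia A i (f e')) (dia A i (g e'))"
      using f g e'_E i by (simp add: dia_jn_hle)
    have "jn A (dia A i (f e')) (dia A i (g e')) \<sqsubseteq> jn A (dia IA i f e) (dia IA i g e)"
      using dia_intermediate_upper[OF f e e'] dia_intermediate_upper[OF g e e'] f g e e'_E i
      by (intro jn_mono) simp_all
    then show "dia A i (jn IA f g e') \<sqsubseteq> jn A (dia IA i f e) (dia IA i g e)"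
      using hle_trans[OF _ _ _ additive] f g e e'_E i by simp
  qed (use f g e i in simp)
  then show "dia IA i (jn IA f g) e \<sqsubseteq> jn IA (dia IA i f) (dia IA i g) e"
    using e by simp
qed

lemma intermediate_box_im_hle:
  assumes f: "f \<in> E \<rightarrow>\<^sub>E carr A" and g: "g \<in> E \<rightarrow>\<^sub>E carr A"
  shows "hle IA (box IA i (im IA f g)) (im IA (box IA i f) (box IA i g))"
  unfolding hle_intermediate_iff[OF box_intermediate_closed[OF intermediate_closed(3)[OF f g]]]
proof
  fix e assume e: "e \<in> E"
  let ?m = "box IA i (im IA f g) e"
  have "mt A ?m (box IA i f e) \<sqsubseteq> box IA i g e"
  proof (rule box_intermediate_greatest[OF g e])
    fix e' assume e': "e' \<in> sim_class i e"
    then have e'_E: "e' \<in> E" by (rule sim_class_subset)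
    have lower: "mt A ?m (box IA i f e) \<sqsubseteq> mt A (box A i (im A (f e') (g e'))) (box A i (f e'))"
      using box_intermediate_lower[OF intermediate_closed(3)[OF f g] e e'] box_intermediate_lower[OF f e e']
        f g e e'_E i
      by (intro mt_mono) simp_all
    have "mt A (box A i (im A (f e') (g e'))) (box A i (f e')) \<sqsubseteq> box A i (g e')"
      using box_im_hle[OF i, of "f e'" "g e'"] f g e'_E i by (simp add: residuation)
    then show "mt A ?m (box IA i f e) \<sqsubseteq> box A i (g e')"
      using hle_trans[OF _ _ _ lower] f g e e'_E i by simp
  qed (use f g e i in simp)
  then show "?m \<sqsubseteq> im IA (box IA i f) (box IA i g) e"
    using f g e i by (simp add: residuation)
qed

lemma intermediate_box_im_hle_im_dia:
  assumes f: "f \<in> E \<rightarrow>\<^sub>E carr A" and g: "g \<in> E \<rightarrow>\<^sub>E carr A"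
  shows "hle IA (box IA i (im IA f g)) (im IA (dia IA i f) (dia IA i g))"
  unfolding hle_intermediate_iff[OF box_intermediate_closed[OF intermediate_closed(3)[OF f g]]]
proof
  fix e assume e: "e \<in> E"
  let ?m = "box IA i (im IA f g) e"
  have "dia IA i f e \<sqsubseteq> im A ?m (dia IA i g e)"
  proof (rule dia_intermediate_least[OF f e])
    fix e' assume e': "e' \<in> sim_class i e"
    then have e'_E: "e' \<in> E" by (rule sim_class_subset)
    have "?m \<sqsubseteq> box A i (im A (f e') (g e'))"
      using box_intermediate_lower[OF intermediate_closed(3)[OF f g] e e'] e'_E by simp
    then have "?m \<sqsubseteq> im A (dia A i (f e')) (dia A i (g e'))"
      using hle_trans[OF _ _ _ _ box_im_hle_im_dia[OF i]] f g e e'_E i by simp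
    then have "mt A (dia A i (f e')) ?m \<sqsubseteq> dia A i (g e')"
      using f g e e'_E i by (simp add: residuation[symmetric] mt_commute)
    then have "mt A (dia A i (f e')) ?m \<sqsubseteq> dia IA i g e"
      using hle_trans[OF _ _ _ _ dia_intermediate_upper[OF g e e']] f g e e'_E i by simp
    then show "dia A i (f e') \<sqsubseteq> im A ?m (dia IA i g e)"
      using f g e e'_E i by (simp add: residuation mt_commute)
  qed (use f g e i in simp)
  then show "?m \<sqsubseteq> im IA (dia IA i f) (dia IA i g) e"
    using f g e i by (simp add: residuation[symmetric] mt_commute)
qed

lemma intermediate_dia_hle_box_dia:
  assumes f: "f \<in> E \<rightarrow>\<^sub>E carr A"
  shows "hle IA (dia IA i f) (box IA i (dia IA i f))"
  unfolding hle_intermediate_iff[OF dia_intermediate_closed[OF f]]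
proof
  fix e assume e: "e \<in> E"
  show "dia IA i f e \<sqsubseteq> box IA i (dia IA i f) e"
  proof (rule box_intermediate_greatest[OF dia_intermediate_closed[OF f] e])
    fix e' assume "e' \<in> sim_class i e"
    then show "dia IA i f e \<sqsubseteq> box A i (dia IA i f e')"
      using dia_hle_box_dia[OF i] f e i
      by (simp add: dia_intermediate_class_const dia_intermediate_eq_dia_hlub)
  qed (use f e i in simp)
qed

lemma intermediate_dia_box_hle:
  assumes f: "f \<in> E \<rightarrow>\<^sub>E carr A"
  shows "hle IA (dia IA i (box IA i f)) (box IA i f)"
  unfolding hle_intermediate_iff[OF dia_intermediate_closed[OF box_intermediate_closed[OF f]]]
proof
  fix e assume e: "e \<in> E"
  have "dia A i (box IA i f e) \<sqsubseteq> box IA i f e"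
  proof (rule box_intermediate_greatest[OF f e])
    fix e' assume e': "e' \<in> sim_class i e"
    then have "dia A i (box IA i f e) \<sqsubseteq> dia A i (box A i (f e'))"
      using box_intermediate_lower[OF f e e'] f e i by (intro dia_mono) (simp_all add: sim_class_subset)
    then show "dia A i (box IA i f e) \<sqsubseteq> box A i (f e')"
      using hle_trans[OF _ _ _ _ dia_box_hle[OF i]] f e e' i by (simp add: sim_class_subset)
  qed (use f e i in simp)
  then show "dia IA i (box IA i f) e \<sqsubseteq> box IA i f e"
    using f e i by (intro dia_intermediate_least) (simp_all add: box_intermediate_class_const)
qed

lemma intermediate_dia_bt_hle: "hle IA (dia IA i (bt IA)) (bt IA)"
  unfolding hle_intermediate_iff[OF dia_intermediate_closed[OF intermediate_closed(4)]]
proof (intro ballI dia_intermediate_least[OF intermediate_closed(4)])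
  fix e e' assume "e \<in> E" "e' \<in> sim_class i e"
  then show "dia A i (bt IA e') \<sqsubseteq> bt IA e"
    using dia_bt_hle[OF i] by (simp add: sim_class_subset)
qed auto

lemma intermediate_tp_hle_box: "hle IA (tp IA) (box IA i (tp IA))"
  unfolding hle_intermediate_iff[OF intermediate_closed(5)]
proof (intro ballI box_intermediate_greatest[OF intermediate_closed(5)])
  fix e e' assume "e \<in> E" "e' \<in> sim_class i e"
  then show "tp IA e \<sqsubseteq> box A i (tp IA e')"
    using tp_hle_box[OF i] by (simp add: sim_class_subset)
qed auto

end

lemma monadic_ha_intermediate: "monadic_ha Ag IA"
  unfolding monadic_ha_def intermediate_simps(1)
  by (intro conjI ballI impI heyting_algebra_intermediate dia_intermediate_closed box_intermediate_closed
      intermediate_dia_mono intermediate_box_mono intermediate_hle_dia intermediate_box_hle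
      intermediate_dia_jn_hle intermediate_box_im_hle intermediate_dia_hle_box_dia
      intermediate_dia_box_hle intermediate_box_im_hle_im_dia intermediate_dia_bt_hle
      intermediate_tp_hle_box)

lemma epistemic_ha_intermediate:
  assumes "epistemic_ha Ag A"
  shows "epistemic_ha Ag IA"
  unfolding epistemic_ha_def
proof (intro conjI ballI monadic_ha_intermediate)
  show "finite (carr IA)"
    using assms finite_E by (simp add: epistemic_ha_def finite_PiE)
next
  fix i f assume i: "i \<in> Ag" and f: "f \<in> carr IA"
  have "jn A (dia IA i f e) (hneg A (dia IA i f e)) = tp A" if e: "e \<in> E" for e
    using assms i f e
    by (simp add: epistemic_ha_def dia_intermediate_eq_dia_hlub)
  then show "jn IA (dia IA i f) (hneg IA (dia IA i f)) = tp IA"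
    by (simp add: intermediate_def hneg_def cong: restrict_cong)
qed

end

theorem proposition3:
  fixes Ag :: "'i set" and A :: "('i, 'a) mha" and E :: "'e set"
    and sim :: "'i \<Rightarrow> 'e \<Rightarrow> 'e \<Rightarrow> bool" and P :: "'i \<Rightarrow> 'e \<Rightarrow> real"
    and Phi :: "'a multiset" and pre :: "'a \<times> nat \<Rightarrow> 'e \<Rightarrow> real"
  assumes "epistemic_ha Ag A"
    and "prob_event_structure Ag A E sim P Phi pre"
  shows "epistemic_ha Ag (intermediate A E sim)"
proof -
  have "monadic_ha Ag A"
    using assms(1) by (simp add: epistemic_ha_def)
  then interpret monadic_frame A Ag E sim
    using assms(2) by unfold_locales (auto simp: monadic_ha_def prob_event_structure_def)
  show ?thesis
    using assms(1) by (rule epistemic_ha_intermediate)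
qed

end
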